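(* Let $G$ be a commutative group, $G'$ a subgroup of $G$, and $U\subset G'$ a finite set. Then $\beta(U,G)=\beta(U,G')$.
   Context: For a finite set $U$ in a commutative group $K$, $\beta(U,K)=\inf_{A,B}\frac{|A+B+U|}{\sqrt{|A||B|}}$, where the infimum is over all nonempty finite $A,B\subset K$ (so the ambient group over which $A,B$ range is indicated). *)

theory Defs
  imports Complex_Main
begin

definition is_subgroup :: "'a::ab_group_add set \<Rightarrow> bool" where
  "is_subgroup H \<longleftrightarrow> 0 \<in> H \<and> (\<forall>x\<in>H. \<forall>y\<in>H. x + y \<in> H) \<and> (\<forall>x\<in>H. - x \<in> H)"

definition sumset3 :: "'a::ab_group_add set \<Rightarrow> 'a set \<Rightarrow> 'a set \<Rightarrow> 'a set" where
  "sumset3 A B U = {a + b + u | a b u. a \<in> A \<and> b \<in> B \<and> u \<in> U}"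

definition beta :: "'a::ab_group_add set \<Rightarrow> 'a set \<Rightarrow> real" where
  "beta U K = Inf {real (card (sumset3 A B U)) / sqrt (real (card A) * real (card B)) | A B.
      A \<subseteq> K \<and> B \<subseteq> K \<and> finite A \<and> finite B \<and> A \<noteq> {} \<and> B \<noteq> {}}"

end

theory Submission
  imports Defs
begin

(* Only beta(U, UNIV) >= beta(U, G) needs proof. Split A and B into their intersections with
   cosets of G. For a class P of A, the sets P + Q + U, Q ranging over the classes of B, lie in
   distinct cosets of G (as U is inside G), and each is a translate of a sumset of subsets of G;
   hence beta * sqrt |P| * S_B <= |A + B + U|, where S_X sums sqrt |Q| over the classes Q of X.
   Weighting by sqrt |P| and summing gives beta |A| S_B <= |A + B + U| S_A; multiplying with the
   symmetric inequality yields beta^2 |A| |B| <= |A + B + U|^2. *)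

lemma is_subgroup_zero: "is_subgroup G \<Longrightarrow> 0 \<in> G"
  unfolding is_subgroup_def by blast

lemma is_subgroup_add: "is_subgroup G \<Longrightarrow> x \<in> G \<Longrightarrow> y \<in> G \<Longrightarrow> x + y \<in> G"
  unfolding is_subgroup_def by blast

lemma is_subgroup_minus: "is_subgroup G \<Longrightarrow> x \<in> G \<Longrightarrow> - x \<in> G"
  unfolding is_subgroup_def by blast

lemma is_subgroup_diff: "is_subgroup G \<Longrightarrow> x \<in> G \<Longrightarrow> y \<in> G \<Longrightarrow> x - y \<in> G"
  using is_subgroup_add is_subgroup_minus by (metis diff_conv_add_uminus)

definition same_coset :: "'a::ab_group_add set \<Rightarrow> 'a set \<Rightarrow> ('a \<times> 'a) set" where
  "same_coset G S = {(s, t) \<in> S \<times> S. t - s \<in> G}"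

lemma equiv_same_coset:
  assumes "is_subgroup G"
  shows "equiv S (same_coset G S)"
proof (rule equivI)
  show "refl_on S (same_coset G S)"
    using is_subgroup_zero[OF assms] by (auto simp: refl_on_def same_coset_def)
  show "sym (same_coset G S)"
    using is_subgroup_minus[OF assms] by (fastforce simp: sym_def same_coset_def)
  show "trans (same_coset G S)"
  proof (rule transI)
    fix r s t assume "(r, s) \<in> same_coset G S" "(s, t) \<in> same_coset G S"
    then have "(s - r) + (t - s) \<in> G" "r \<in> S" "t \<in> S"
      using is_subgroup_add[OF assms] unfolding same_coset_def by blast+
    then show "(r, t) \<in> same_coset G S" by (simp add: same_coset_def)
  qed
qed (auto simp: same_coset_def)

lemma same_coset_class_diff:
  assumes "is_subgroup G" "X \<in> S // same_coset G S" "x \<in> X" "a \<in> X"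
  shows "a - x \<in> G"
  using in_quotient_imp_in_rel[OF equiv_same_coset[OF assms(1)] assms(2), of x a] assms(3,4)
  by (simp add: same_coset_def)

lemma card_eq_sum_card_quotient:
  assumes "finite A" "equiv A r"
  shows "card A = (\<Sum>X\<in>A // r. card X)"
proof -
  have "pairwise disjnt (A // r)"
    using quotient_disj[OF assms(2)] by (fastforce simp: pairwise_def disjnt_def)
  moreover have "finite X" if "X \<in> A // r" for X
    using finite_equiv_class[OF assms(1) equiv_type[OF assms(2)] that] .
  ultimately have "card (\<Union>(A // r)) = (\<Sum>X\<in>A // r. card X)"
    by (rule card_Union_disjoint)
  then show ?thesis using Union_quotient[OF assms(2)] by simp
qed

lemma finite_sumset3: "finite A \<Longrightarrow> finite B \<Longrightarrow> finite U \<Longrightarrow> finite (sumset3 A B U)"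
proof -
  assume "finite A" "finite B" "finite U"
  moreover have "sumset3 A B U = (\<lambda>(a, b, u). a + b + u) ` (A \<times> B \<times> U)"
    unfolding sumset3_def by force
  ultimately show ?thesis by simp
qed

lemma sumset3_commute: "sumset3 A B U = sumset3 B A U"
  unfolding sumset3_def by (fastforce simp: ac_simps)

lemma sumset3_mono: "A \<subseteq> A' \<Longrightarrow> B \<subseteq> B' \<Longrightarrow> sumset3 A B U \<subseteq> sumset3 A' B' U"
  unfolding sumset3_def by blast

lemma sumset3_translate:
  "sumset3 ((\<lambda>a. a - x) ` A) ((\<lambda>b. b - y) ` B) U = (\<lambda>z. z - (x + y)) ` sumset3 A B U"
proof -
  have shift: "(a - x) + (b - y) + u = (a + b + u) - (x + y)" for a b u :: 'a
    by (simp add: algebra_simps)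
  show ?thesis
  proof (intro equalityI subsetI)
    fix z assume "z \<in> sumset3 ((\<lambda>a. a - x) ` A) ((\<lambda>b. b - y) ` B) U"
    then obtain a b u where abu: "a \<in> A" "b \<in> B" "u \<in> U" and z: "z = (a + b + u) - (x + y)"
      unfolding sumset3_def shift by auto
    have "a + b + u \<in> sumset3 A B U"
      unfolding sumset3_def using abu by blast
    then show "z \<in> (\<lambda>z. z - (x + y)) ` sumset3 A B U"
      unfolding z by (rule imageI)
  next
    fix z assume "z \<in> (\<lambda>z. z - (x + y)) ` sumset3 A B U"
    then obtain a b u where abu: "a \<in> A" "b \<in> B" "u \<in> U" and z: "z = (a - x) + (b - y) + u"
      unfolding sumset3_def shift by auto
    then show "z \<in> sumset3 ((\<lambda>a. a - x) ` A) ((\<lambda>b. b - y) ` B) U"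
      unfolding sumset3_def by blast
  qed
qed

lemma beta_mult_sqrt_le:
  assumes "A \<subseteq> K" "B \<subseteq> K" "finite A" "finite B" "A \<noteq> {}" "B \<noteq> {}"
  shows "beta U K * sqrt (real (card A) * real (card B)) \<le> real (card (sumset3 A B U))"
proof -
  have "beta U K \<le> real (card (sumset3 A B U)) / sqrt (real (card A) * real (card B))"
    unfolding beta_def by (rule cInf_lower) (use assms in \<open>auto intro: bdd_belowI[of _ 0]\<close>)
  moreover have "0 < sqrt (real (card A) * real (card B))"
    using assms by (simp add: card_gt_0_iff)
  ultimately show ?thesis by (simp add: pos_le_divide_eq)
qed

lemma beta_greatest:
  assumes "K \<noteq> {}"
    and "\<And>A B. A \<subseteq> K \<Longrightarrow> B \<subseteq> K \<Longrightarrow> finite A \<Longrightarrow> finite B \<Longrightarrow> A \<noteq> {} \<Longrightarrow> B \<noteq> {} \<Longrightarrow>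
           c * sqrt (real (card A) * real (card B)) \<le> real (card (sumset3 A B U))"
  shows "c \<le> beta U K"
  unfolding beta_def
proof (rule cInf_greatest, goal_cases nonempty lower)
  case nonempty
  obtain k where "k \<in> K" using assms(1) by blast
  then show ?case by blast
next
  case (lower r)
  then obtain A B where AB: "A \<subseteq> K" "B \<subseteq> K" "finite A" "finite B" "A \<noteq> {}" "B \<noteq> {}"
    and r: "r = real (card (sumset3 A B U)) / sqrt (real (card A) * real (card B))"
    by blast
  have "0 < sqrt (real (card A) * real (card B))"
    using AB by (simp add: card_gt_0_iff)
  then show ?case unfolding r using assms(2)[OF AB] by (simp add: pos_le_divide_eq)
qed

lemma beta_nonneg: "K \<noteq> {} \<Longrightarrow> 0 \<le> beta U K"
  by (rule beta_greatest) auto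

lemma beta_antimono:
  assumes "K \<noteq> {}" "K \<subseteq> L"
  shows "beta U L \<le> beta U K"
  using assms beta_mult_sqrt_le[of _ L] by (intro beta_greatest) auto

lemma beta_mult_sqrt_le_translated:
  assumes "(\<lambda>a. a - x) ` A \<subseteq> K" "(\<lambda>b. b - y) ` B \<subseteq> K"
    and "finite A" "finite B" "A \<noteq> {}" "B \<noteq> {}"
  shows "beta U K * sqrt (real (card A) * real (card B)) \<le> real (card (sumset3 A B U))"
proof -
  have "card ((\<lambda>a. a - x) ` A) = card A" "card ((\<lambda>b. b - y) ` B) = card B"
    "card ((\<lambda>z. z - (x + y)) ` sumset3 A B U) = card (sumset3 A B U)"
    by (simp_all add: card_image inj_on_def)
  then show ?thesis
    using beta_mult_sqrt_le[OF assms(1,2), where U = U] assms(3-6) by (simp add: sumset3_translate)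
qed

lemma sumset3_disjoint_classes:
  assumes G: "is_subgroup G" and "U \<subseteq> G" "(\<lambda>a. a - x) ` P \<subseteq> G"
    and Q: "Q \<in> B // same_coset G B" and Q': "Q' \<in> B // same_coset G B" and "Q \<noteq> Q'"
  shows "sumset3 P Q U \<inter> sumset3 P Q' U = {}"
proof (rule ccontr)
  assume "sumset3 P Q U \<inter> sumset3 P Q' U \<noteq> {}"
  then obtain a b u a' b' u' where "a \<in> P" "b \<in> Q" "u \<in> U" "a' \<in> P" "b' \<in> Q'" "u' \<in> U"
    and sum_eq: "a + b + u = a' + b' + u'"
    unfolding sumset3_def by blast
  then have "a - x \<in> G" "a' - x \<in> G" "u \<in> G" "u' \<in> G"
    using assms(2,3) by auto
  then have "((a - x) - (a' - x)) + (u - u') \<in> G"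
    by (meson G is_subgroup_add is_subgroup_diff)
  moreover have "((a - x) - (a' - x)) + (u - u') = b' - b"
    using sum_eq by (simp add: algebra_simps)
  moreover have "b \<in> B" "b' \<in> B"
    using in_quotient_imp_subset[OF equiv_same_coset[OF G]] Q Q' \<open>b \<in> Q\<close> \<open>b' \<in> Q'\<close> by blast+
  ultimately have "(b, b') \<in> same_coset G B"
    by (simp add: same_coset_def)
  then have "Q = Q'"
    by (rule quotient_eqI[OF equiv_same_coset[OF G] Q Q' \<open>b \<in> Q\<close> \<open>b' \<in> Q'\<close>])
  with \<open>Q \<noteq> Q'\<close> show False ..
qed

definition coset_sqrt_sum :: "'a::ab_group_add set \<Rightarrow> 'a set \<Rightarrow> real" where
  "coset_sqrt_sum G S = (\<Sum>Q\<in>S // same_coset G S. sqrt (real (card Q)))"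

lemma coset_sqrt_sum_pos:
  assumes G: "is_subgroup G" and "finite S" "S \<noteq> {}"
  shows "0 < coset_sqrt_sum G S"
  unfolding coset_sqrt_sum_def
proof (rule sum_pos)
  show "finite (S // same_coset G S)" "S // same_coset G S \<noteq> {}"
    using assms finite_quotient equiv_type[OF equiv_same_coset[OF G]] by auto
  fix Q assume "Q \<in> S // same_coset G S"
  then have "Q \<noteq> {}" "finite Q"
    using in_quotient_imp_non_empty[OF equiv_same_coset[OF G]]
      finite_equiv_class[OF assms(2) equiv_type[OF equiv_same_coset[OF G]]] by auto
  then show "0 < sqrt (real (card Q))" by (simp add: card_gt_0_iff)
qed

lemma beta_mult_coset_sqrt_sum_le:
  assumes G: "is_subgroup G" and U: "U \<subseteq> G" "finite U" and "finite B"
    and P: "(\<lambda>a. a - x) ` P \<subseteq> G" "finite P" "P \<noteq> {}"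
  shows "beta U G * sqrt (real (card P)) * coset_sqrt_sum G B \<le> real (card (sumset3 P B U))"
proof -
  let ?Qs = "B // same_coset G B"
  have Q: "Q \<subseteq> B" "Q \<noteq> {}" "finite Q" if "Q \<in> ?Qs" for Q
  proof -
    show "Q \<subseteq> B" "Q \<noteq> {}"
      using in_quotient_imp_subset[OF equiv_same_coset[OF G] that]
        in_quotient_imp_non_empty[OF equiv_same_coset[OF G] that] .
    then show "finite Q" using finite_subset \<open>finite B\<close> by blast
  qed
  have "finite ?Qs"
    using finite_quotient[OF \<open>finite B\<close> equiv_type[OF equiv_same_coset[OF G]]] .
  have "beta U G * sqrt (real (card P)) * coset_sqrt_sum G B
      = (\<Sum>Q\<in>?Qs. beta U G * sqrt (real (card P) * real (card Q)))"
    by (simp add: coset_sqrt_sum_def sum_distrib_left real_sqrt_mult mult.assoc)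
  also have "\<dots> \<le> (\<Sum>Q\<in>?Qs. real (card (sumset3 P Q U)))"
  proof (rule sum_mono)
    fix Q assume "Q \<in> ?Qs"
    then obtain y where "y \<in> Q" using Q by blast
    have "(\<lambda>b. b - y) ` Q \<subseteq> G"
      using same_coset_class_diff[OF G \<open>Q \<in> ?Qs\<close> \<open>y \<in> Q\<close>] by blast
    then show "beta U G * sqrt (real (card P) * real (card Q)) \<le> real (card (sumset3 P Q U))"
      using Q[OF \<open>Q \<in> ?Qs\<close>] P by (intro beta_mult_sqrt_le_translated) auto
  qed
  also have "\<dots> = real (card (\<Union>Q\<in>?Qs. sumset3 P Q U))"
  proof -
    have "card (\<Union>Q\<in>?Qs. sumset3 P Q U) = (\<Sum>Q\<in>?Qs. card (sumset3 P Q U))"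
    proof (rule card_UN_disjoint[OF \<open>finite ?Qs\<close>])
      show "\<forall>Q\<in>?Qs. finite (sumset3 P Q U)"
        using Q(3) P(2) U(2) finite_sumset3 by blast
      show "\<forall>Q\<in>?Qs. \<forall>Q'\<in>?Qs. Q \<noteq> Q' \<longrightarrow> sumset3 P Q U \<inter> sumset3 P Q' U = {}"
        using sumset3_disjoint_classes[OF G U(1) P(1)] by blast
    qed
    then show ?thesis by simp
  qed
  also have "\<dots> \<le> real (card (sumset3 P B U))"
  proof -
    have "(\<Union>Q\<in>?Qs. sumset3 P Q U) \<subseteq> sumset3 P B U"
      using sumset3_mono[OF order_refl Q(1)] by blast
    then show ?thesis
      using finite_sumset3[OF P(2) \<open>finite B\<close> U(2)] by (simp add: card_mono)
  qed
  finally show ?thesis .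
qed

lemma beta_mult_card_mult_coset_sqrt_sum_le:
  assumes G: "is_subgroup G" and U: "U \<subseteq> G" "finite U" and "finite A" "finite B"
  shows "beta U G * real (card A) * coset_sqrt_sum G B
    \<le> real (card (sumset3 A B U)) * coset_sqrt_sum G A"
proof -
  let ?Ps = "A // same_coset G A"
  let ?N = "real (card (sumset3 A B U))"
  have "real (card A) = (\<Sum>P\<in>?Ps. sqrt (real (card P)) * sqrt (real (card P)))"
    using card_eq_sum_card_quotient[OF \<open>finite A\<close> equiv_same_coset[OF G]] by simp
  then have "beta U G * real (card A) * coset_sqrt_sum G B
      = (\<Sum>P\<in>?Ps. sqrt (real (card P)) * (beta U G * sqrt (real (card P)) * coset_sqrt_sum G B))"
    by (simp add: sum_distrib_left sum_distrib_right ac_simps)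
  also have "\<dots> \<le> (\<Sum>P\<in>?Ps. sqrt (real (card P)) * ?N)"
  proof (intro sum_mono mult_left_mono)
    fix P assume P: "P \<in> ?Ps"
    then have "P \<subseteq> A" "P \<noteq> {}"
      using in_quotient_imp_subset in_quotient_imp_non_empty equiv_same_coset[OF G] by blast+
    then obtain x where "x \<in> P" by blast
    have "beta U G * sqrt (real (card P)) * coset_sqrt_sum G B \<le> real (card (sumset3 P B U))"
      using same_coset_class_diff[OF G P \<open>x \<in> P\<close>] \<open>P \<subseteq> A\<close> \<open>P \<noteq> {}\<close> \<open>finite A\<close>
      by (intro beta_mult_coset_sqrt_sum_le[OF G U \<open>finite B\<close>]) (auto intro: finite_subset)
    also have "\<dots> \<le> ?N"
      using card_mono[OF finite_sumset3[OF assms(4,5,3)] sumset3_mono[OF \<open>P \<subseteq> A\<close> order_refl]]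
      by simp
    finally show "beta U G * sqrt (real (card P)) * coset_sqrt_sum G B \<le> ?N" .
  qed simp
  also have "\<dots> = ?N * coset_sqrt_sum G A"
    by (simp add: coset_sqrt_sum_def sum_distrib_left mult.commute)
  finally show ?thesis .
qed

lemma beta_subgroup_mult_sqrt_le:
  assumes G: "is_subgroup G" and U: "U \<subseteq> G" "finite U"
    and "finite A" "finite B" "A \<noteq> {}" "B \<noteq> {}"
  shows "beta U G * sqrt (real (card A) * real (card B)) \<le> real (card (sumset3 A B U))"
proof -
  define b where "b = beta U G"
  define N where "N = real (card (sumset3 A B U))"
  define sA where "sA = coset_sqrt_sum G A"
  define sB where "sB = coset_sqrt_sum G B"
  have "0 \<le> b" unfolding b_def using beta_nonneg is_subgroup_zero[OF G] by blast
  have "0 < sA" "0 < sB"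
    unfolding sA_def sB_def using coset_sqrt_sum_pos[OF G] assms(4-7) by auto
  have bound_A: "b * real (card A) * sB \<le> N * sA"
    unfolding b_def N_def sA_def sB_def
    using beta_mult_card_mult_coset_sqrt_sum_le[OF G U \<open>finite A\<close> \<open>finite B\<close>] .
  have bound_B: "b * real (card B) * sA \<le> N * sB"
    unfolding b_def N_def sA_def sB_def sumset3_commute[of A]
    using beta_mult_card_mult_coset_sqrt_sum_le[OF G U \<open>finite B\<close> \<open>finite A\<close>] .
  have "(b * real (card A) * sB) * (b * real (card B) * sA) \<le> (N * sA) * (N * sB)"
    using \<open>0 \<le> b\<close> \<open>0 < sA\<close> \<open>0 < sB\<close> by (intro mult_mono[OF bound_A bound_B]) (auto simp: N_def)
  then have "(b\<^sup>2 * (real (card A) * real (card B))) * (sA * sB) \<le> N\<^sup>2 * (sA * sB)"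
    by (simp add: power2_eq_square ac_simps)
  then have "(b * sqrt (real (card A) * real (card B)))\<^sup>2 \<le> N\<^sup>2"
    using \<open>0 < sA\<close> \<open>0 < sB\<close> by (simp add: power_mult_distrib)
  then show ?thesis
    unfolding b_def N_def by (rule power2_le_imp_le) simp
qed

theorem mainTheorem5:
  fixes G' :: "'a::ab_group_add set" and U :: "'a set"
  assumes "is_subgroup G'" and "finite U" and "U \<subseteq> G'"
  shows "beta U (UNIV :: 'a set) = beta U G'"
proof (rule antisym)
  show "beta U UNIV \<le> beta U G'"
    using beta_antimono is_subgroup_zero[OF assms(1)] by blast
  show "beta U G' \<le> beta U UNIV"
    using beta_subgroup_mult_sqrt_le[OF assms(1,3,2)] by (intro beta_greatest) auto
qed

end
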